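(* Let $m,n$ be positive integers. Every extreme point of the convex set $\Gamma^\pi_{m,n}$ of $m\times n$ centrosymmetric stochastic matrices can be written in the form $\frac{1}{2}(R+R^\pi)$ for some $m\times n$ rectangular permutation matrix $R$.
   Context: A real $m\times n$ matrix $A=(a_{i,j})$ is stochastic if all entries are nonnegative and every row sums to $1$. For $A\in M_{m,n}$, $A^\pi$ denotes the $m\times n$ matrix with $(A^\pi)_{i,j}=a_{m+1-i,n+1-j}$ (rotation by $180^\circ$); $A$ is centrosymmetric if $A=A^\pi$. $\Gamma^\pi_{m,n}$ is the set of $m\times n$ centrosymmetric stochastic matrices. A rectangular permutation matrix is an $m\times n$ $(0,1)$-matrix with exactly one $1$ in each row. *)

theory Defs
  imports "HOL-Analysis.Analysis"
begin

text \<open>An m x n real matrix is an element of real^'n^'m (rows indexed by 'm, columns by 'n),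
  where the index types are finite and linearly ordered; the order identifies each index type
  with the positions 1..m (resp. 1..n).\<close>

type_synonym ('n, 'm) mat = "((real, 'n) vec, 'm) vec"

definition rank :: "'a::{finite,linorder} \<Rightarrow> nat" where
  "rank i = card {k. k < i}"

text \<open>rank i is the 0-based position of i; the 180-degree rotation sends position p
  to position CARD - 1 - p.\<close>
definition rev_idx :: "'a::{finite,linorder} \<Rightarrow> 'a" where
  "rev_idx i = (THE j. rank j = CARD('a) - 1 - rank i)"

definition rot :: "('n::{finite,linorder}, 'm::{finite,linorder}) mat \<Rightarrow> ('n, 'm) mat" where
  "rot A = (\<chi> i j. A $ (rev_idx i) $ (rev_idx j))"

definition stochastic :: "('n::finite, 'm::finite) mat \<Rightarrow> bool" where
  "stochastic A \<longleftrightarrow> (\<forall>i j. 0 \<le> A $ i $ j) \<and> (\<forall>i. (\<Sum>j\<in>UNIV. A $ i $ j) = 1)"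

definition centrosymmetric :: "('n::{finite,linorder}, 'm::{finite,linorder}) mat \<Rightarrow> bool" where
  "centrosymmetric A \<longleftrightarrow> A = rot A"

definition Gamma_pi :: "('n::{finite,linorder}, 'm::{finite,linorder}) mat set" where
  "Gamma_pi = {A. centrosymmetric A \<and> stochastic A}"

definition rect_perm_matrix :: "('n::finite, 'm::finite) mat \<Rightarrow> bool" where
  "rect_perm_matrix R \<longleftrightarrow> (\<forall>i j. R $ i $ j = 0 \<or> R $ i $ j = 1) \<and>
     (\<forall>i. card {j. R $ i $ j = 1} = 1)"

end

theory Submission
  imports Defs
begin

text \<open>Let \<open>A\<close> be an extreme point of \<open>\<Gamma>\<^sup>\<pi>\<close>. If a row \<open>i\<close> had positive entries in two columns
  \<open>j\<^sub>1 \<noteq> j\<^sub>2\<close>, moving a small mass \<open>e\<close> between \<open>(i,j\<^sub>1)\<close> and \<open>(i,j\<^sub>2)\<close> and symmetrising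
  under the rotation would give a centrosymmetric perturbation \<open>D\<close> with zero row sums and
  \<open>\<bar>D\<bar> \<le> A\<close>, so \<open>A \<plusminus> D \<in> \<Gamma>\<^sup>\<pi>\<close> and hence \<open>D = 0\<close>. This cancellation only happens when the
  row is fixed by the rotation and \<open>j\<^sub>2\<close> is the mirror image of \<open>j\<^sub>1\<close>. So a row moved by the
  rotation is a unit vector, while a fixed row is either a unit vector or has entries \<open>1/2\<close>
  in a pair of mirrored columns; choosing one positive column per row gives \<open>R\<close>.\<close>

lemma extreme_point_of_perturbation_eq_0:
  fixes x d :: "'a::real_vector"
  assumes "x extreme_point_of S" "x + d \<in> S" "x - d \<in> S"
  shows "d = 0"
proof (rule ccontr)
  assume "d \<noteq> 0"
  then have "x - d \<noteq> x + d"
    by (simp add: algebra_simps flip: scaleR_2)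
  have "x = midpoint (x - d) (x + d)"
    by (simp add: midpoint_def scaleR_add_right[symmetric])
  also have "\<dots> \<in> open_segment (x - d) (x + d)"
    using \<open>x - d \<noteq> x + d\<close> by simp
  finally show False
    using assms unfolding extreme_point_of_def by blast
qed

lemma rank_less_card: "rank (i::'a::{finite,linorder}) < CARD('a)"
  unfolding rank_def by (rule psubset_card_mono) auto

lemma strict_mono_rank: "strict_mono (rank :: 'a::{finite,linorder} \<Rightarrow> nat)"
  unfolding strict_mono_def rank_def by (auto intro!: psubset_card_mono)

lemma bij_betw_rank: "bij_betw (rank :: 'a::{finite,linorder} \<Rightarrow> nat) UNIV {..<CARD('a)}"
proof -
  have inj: "inj (rank :: 'a \<Rightarrow> nat)"
    by (rule strict_mono_imp_inj_on) (simp add: strict_mono_rank)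
  moreover have "rank ` (UNIV :: 'a set) = {..<CARD('a)}"
  proof (rule card_subset_eq)
    show "rank ` (UNIV :: 'a set) \<subseteq> {..<CARD('a)}" using rank_less_card by auto
    show "card (rank ` (UNIV :: 'a set)) = card {..<CARD('a)}" using inj by (simp add: card_image)
  qed simp
  ultimately show ?thesis by (simp add: bij_betw_def)
qed

lemma rank_rev_idx: "rank (rev_idx (i::'a::{finite,linorder})) = CARD('a) - 1 - rank i"
proof -
  have "CARD('a) - 1 - rank i \<in> rank ` (UNIV :: 'a set)"
    using bij_betw_rank[where 'a='a] by (simp add: bij_betw_def)
  moreover have "inj (rank :: 'a \<Rightarrow> nat)"
    using bij_betw_rank[where 'a='a] by (simp add: bij_betw_def)
  ultimately have "\<exists>!j::'a. rank j = CARD('a) - 1 - rank i"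
    by (auto simp: inj_eq)
  then show ?thesis unfolding rev_idx_def by (rule theI')
qed

lemma rev_idx_rev_idx [simp]: "rev_idx (rev_idx (i::'a::{finite,linorder})) = i"
proof -
  have "rank (rev_idx (rev_idx i)) = rank i"
    using rank_less_card[of i] by (simp add: rank_rev_idx)
  then show ?thesis using strict_mono_rank[where 'a='a] strict_mono_eq by blast
qed

lemma rev_idx_eq_iff: "rev_idx (i::'a::{finite,linorder}) = j \<longleftrightarrow> i = rev_idx j"
  by (metis rev_idx_rev_idx)

lemma sum_rev_idx: "(\<Sum>j\<in>UNIV. f (rev_idx j)) = (\<Sum>j\<in>UNIV. f j)"
  by (rule sum.reindex_bij_witness[of _ rev_idx rev_idx]) auto

lemma rot_nth [simp]: "rot A $ i $ j = A $ rev_idx i $ rev_idx j"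
  unfolding rot_def by simp

lemma rot_rot [simp]: "rot (rot A) = A"
  by (simp add: vec_eq_iff)

lemma rot_add: "rot (A + B) = rot A + rot B"
  by (simp add: vec_eq_iff)

lemma rot_uminus: "rot (- A) = - rot A"
  by (simp add: vec_eq_iff)

lemma mem_Gamma_pi_iff:
  "A \<in> Gamma_pi \<longleftrightarrow> rot A = A \<and> (\<forall>i j. 0 \<le> A$i$j) \<and> (\<forall>i. (\<Sum>j\<in>UNIV. A$i$j) = 1)"
  by (auto simp: Gamma_pi_def centrosymmetric_def stochastic_def)

lemma Gamma_pi_rev_idx: "A \<in> Gamma_pi \<Longrightarrow> A $ rev_idx i $ rev_idx j = A $ i $ j"
  by (metis mem_Gamma_pi_iff rot_nth)

lemma Gamma_pi_add_perturbation:
  assumes "A \<in> Gamma_pi" "rot D = D" "\<And>i. (\<Sum>j\<in>UNIV. D$i$j) = 0" "\<And>i j. \<bar>D$i$j\<bar> \<le> A$i$j"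
  shows "A + D \<in> Gamma_pi"
  unfolding mem_Gamma_pi_iff
proof (intro conjI allI)
  show "rot (A + D) = A + D" using assms by (simp add: mem_Gamma_pi_iff rot_add)
  show "0 \<le> (A + D)$i$j" for i j using assms(4)[of i j] by (simp add: abs_le_iff)
  show "(\<Sum>j\<in>UNIV. (A + D)$i$j) = 1" for i using assms by (simp add: mem_Gamma_pi_iff sum.distrib)
qed

lemma extreme_point_Gamma_pi_symmetrized_perturbation:
  fixes A E :: "('n::{finite,linorder}, 'm::{finite,linorder}) mat"
  assumes ext: "A extreme_point_of Gamma_pi"
    and rows: "\<And>i. (\<Sum>j\<in>UNIV. E$i$j) = 0" and small: "\<And>i j. 2 * \<bar>E$i$j\<bar> \<le> A$i$j"
  shows "E + rot E = 0"
proof -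
  define D where "D = E + rot E"
  have A: "A \<in> Gamma_pi" using ext by (simp add: extreme_point_of_def)
  have rot: "rot D = D" by (simp add: D_def rot_add add.commute)
  have sum: "(\<Sum>j\<in>UNIV. D$i$j) = 0" for i
    using rows[of i] rows[of "rev_idx i"] sum_rev_idx[of "\<lambda>j. E $ rev_idx i $ j"]
    by (simp add: D_def sum.distrib)
  have bound: "\<bar>D$i$j\<bar> \<le> A$i$j" for i j
  proof -
    have "\<bar>D$i$j\<bar> \<le> \<bar>E$i$j\<bar> + \<bar>E $ rev_idx i $ rev_idx j\<bar>"
      by (simp add: D_def abs_triangle_ineq)
    also have "\<dots> \<le> A$i$j / 2 + A $ rev_idx i $ rev_idx j / 2"
      using small[of i j] small[of "rev_idx i" "rev_idx j"] by simp
    also have "\<dots> = A$i$j" using Gamma_pi_rev_idx[OF A] by simp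
    finally show ?thesis .
  qed
  have "A + D \<in> Gamma_pi" using Gamma_pi_add_perturbation[OF A rot sum bound] .
  moreover have "A - D \<in> Gamma_pi"
    using Gamma_pi_add_perturbation[OF A, of "- D"] rot sum bound
    by (simp add: rot_uminus sum_negf)
  ultimately show ?thesis using extreme_point_of_perturbation_eq_0[OF ext] D_def by blast
qed

lemma extreme_point_Gamma_pi_two_positive:
  fixes A :: "('n::{finite,linorder}, 'm::{finite,linorder}) mat"
  assumes ext: "A extreme_point_of Gamma_pi"
    and pos: "0 < A$i$j\<^sub>1" "0 < A$i$j\<^sub>2" and ne: "j\<^sub>1 \<noteq> j\<^sub>2"
  shows "rev_idx i = i \<and> rev_idx j\<^sub>1 = j\<^sub>2"
proof -
  have A: "A \<in> Gamma_pi" using ext by (simp add: extreme_point_of_def)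
  define e where "e = min (A$i$j\<^sub>1) (A$i$j\<^sub>2) / 2"
  define E :: "('n, 'm) mat"
    where "E = (\<chi> x y. if x = i then e * ((if y = j\<^sub>1 then 1 else 0) - (if y = j\<^sub>2 then 1 else 0)) else 0)"
  have "e > 0" using pos by (simp add: e_def)
  have "(\<Sum>y\<in>UNIV. E$x$y) = 0" for x
    by (cases "x = i") (simp_all add: E_def sum_subtractf flip: sum_distrib_left)
  moreover have "2 * \<bar>E$x$y\<bar> \<le> A$x$y" for x y
    using \<open>e > 0\<close> ne A[unfolded mem_Gamma_pi_iff] by (simp add: E_def e_def)
  ultimately have "E + rot E = 0"
    by (rule extreme_point_Gamma_pi_symmetrized_perturbation[OF ext])
  then have "E $ rev_idx i $ rev_idx j\<^sub>1 = - (E $ i $ j\<^sub>1)"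
    by (metis add_eq_0_iff rot_nth vector_add_component zero_index)
  then have "E $ rev_idx i $ rev_idx j\<^sub>1 = - e"
    using ne by (simp add: E_def)
  then show ?thesis using \<open>e > 0\<close> by (auto simp: E_def split: if_splits)
qed

lemma extreme_point_Gamma_pi_row:
  fixes A :: "('n::{finite,linorder}, 'm::{finite,linorder}) mat"
  assumes ext: "A extreme_point_of Gamma_pi" and pos: "0 < A$i$j"
  shows "A$i$k = (if rev_idx i = i then (of_bool (k = j) + of_bool (k = rev_idx j)) / 2
                  else of_bool (k = j))"
proof -
  have A: "A \<in> Gamma_pi" using ext by (simp add: extreme_point_of_def)
  then have row: "(\<Sum>k\<in>UNIV. A$i$k) = 1" and nonneg: "\<And>k. 0 \<le> A$i$k"
    by (auto simp: mem_Gamma_pi_iff)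
  have supp: "A$i$k = 0" if "k \<noteq> j" "rev_idx i \<noteq> i \<or> rev_idx j \<noteq> k" for k
  proof (rule ccontr)
    assume "A$i$k \<noteq> 0"
    with nonneg[of k] have "0 < A$i$k" by simp
    with that show False
      using extreme_point_Gamma_pi_two_positive[OF ext pos] by blast
  qed
  show ?thesis
  proof (cases "rev_idx i = i \<and> rev_idx j \<noteq> j")
    case True
    have sym: "A $ i $ rev_idx j = A$i$j" using Gamma_pi_rev_idx[OF A, of i j] True by simp
    have "(\<Sum>k\<in>UNIV. A$i$k) = (\<Sum>k\<in>{j, rev_idx j}. A$i$k)"
      by (rule sum.mono_neutral_right) (auto intro: supp)
    moreover have "j \<noteq> rev_idx j" using True by metis
    ultimately have "A$i$j = 1/2" using row sym by simp
    then show ?thesis using True sym supp[of k] by (cases "k = j \<or> k = rev_idx j") auto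
  next
    case False
    have "(\<Sum>k\<in>UNIV. A$i$k) = (\<Sum>k\<in>{j}. A$i$k)"
      by (rule sum.mono_neutral_right) (use False in \<open>auto intro: supp\<close>)
    then have "A$i$j = 1" using row by simp
    then show ?thesis using False supp[of k] by (cases "k = j") auto
  qed
qed

lemma stochastic_row_has_pos:
  assumes "stochastic A"
  shows "\<exists>j. 0 < A$i$j"
proof (rule ccontr)
  assume "\<nexists>j. 0 < A$i$j"
  with assms have "A$i$j = 0" for j
    unfolding stochastic_def by (meson antisym not_less)
  then have "(\<Sum>j\<in>UNIV. A$i$j) = 0" by simp
  with assms show False by (simp add: stochastic_def)
qed

lemma rect_perm_matrix_indicator:
  "rect_perm_matrix (\<chi> i j. of_bool (j = f i) :: ('n::finite, 'm::finite) mat)"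
proof -
  have "{j. of_bool (j = f i) = (1::real)} = {f i}" for i by auto
  then show ?thesis by (simp add: rect_perm_matrix_def)
qed

theorem mainTheorem1:
  fixes A :: "('n::{finite,linorder}, 'm::{finite,linorder}) mat"
  assumes "A extreme_point_of Gamma_pi"
  shows "\<exists>R :: ('n, 'm) mat. rect_perm_matrix R \<and> A = (1/2) *\<^sub>R (R + rot R)"
proof -
  have A: "A \<in> Gamma_pi" using assms by (simp add: extreme_point_of_def)
  then have "\<forall>i. \<exists>j. 0 < A$i$j" by (simp add: Gamma_pi_def stochastic_row_has_pos)
  then obtain f where f: "\<And>i. 0 < A $ i $ f i" by metis
  define R :: "('n, 'm) mat" where "R = (\<chi> i j. of_bool (j = f i))"
  have "A$i$j = (R$i$j + rot R$i$j) / 2" for i j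
  proof (cases "rev_idx i = i")
    case True
    then show ?thesis
      using extreme_point_Gamma_pi_row[OF assms f[of i], of j] by (simp add: R_def rev_idx_eq_iff)
  next
    case False
    then have "A$i$j = of_bool (j = f i)"
      using extreme_point_Gamma_pi_row[OF assms f[of i], of j] by simp
    moreover have "A$i$j = of_bool (rev_idx j = f (rev_idx i))"
      using extreme_point_Gamma_pi_row[OF assms f[of "rev_idx i"], of "rev_idx j"] False
        Gamma_pi_rev_idx[OF A, of i j] by (simp add: rev_idx_eq_iff)
    ultimately show ?thesis by (simp add: R_def)
  qed
  then have "A = (1/2) *\<^sub>R (R + rot R)" by (simp add: vec_eq_iff)
  then show ?thesis using rect_perm_matrix_indicator unfolding R_def by blast
qed

end
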